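(* Let $f$ and $g$ be real-valued functions defined on $[0,\infty)$ such that $g(x)=\int_x^\infty f(t)\,dt$ for all $x\geq0$. Assume that, as $x$ traverses from $0$ to $+\infty$, $f(x)$ changes sign in one of the orders "$-,+$", "$+,-$", "$+,-,+$" or "$-,+,-,+$". Then the sign variation of $g(x)$, as $x$ traverses from $0$ to $+\infty$, is one of the final segments of the sign variation of $f$ (i.e. it is obtained from the sign sequence of $f$ by deleting some, possibly none, of its initial terms, keeping at least the last one). *)

theory Defs
  imports "HOL-Analysis.Analysis"
begin

text \<open>A sign is encoded as the real number 1 (positive) or -1 (negative).
  The function h has sign s on the set I if s * h is nonnegative on I and h vanishes
  at only finitely many points of I.\<close>
definition sign_on :: "(real \<Rightarrow> real) \<Rightarrow> real set \<Rightarrow> real \<Rightarrow> bool" where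
  "sign_on h I s \<longleftrightarrow> (\<forall>x\<in>I. s * h x \<ge> 0) \<and> finite {x\<in>I. h x = 0}"

definition has_sign_pattern :: "(real \<Rightarrow> real) \<Rightarrow> real list \<Rightarrow> bool" where
  "has_sign_pattern h ss \<longleftrightarrow> ss \<noteq> [] \<and>
     (\<exists>b :: nat \<Rightarrow> real. b 0 = 0 \<and>
        (\<forall>i. Suc i < length ss \<longrightarrow> b i < b (Suc i) \<and> sign_on h {b i<..<b (Suc i)} (ss ! i)) \<and>
        sign_on h {b (length ss - 1)<..} (last ss))"

end

theory Submission
  imports Defs
begin

text \<open>If \<open>f\<close> has sign \<open>s\<close> on an interval \<open>(u, v)\<close>, then \<open>s \<cdot> g\<close> is strictly decreasing on
  \<open>[u, v]\<close>: \<open>s \<cdot> (g u - g v)\<close> is the integral of \<open>s \<cdot> f \<ge> 0\<close> over \<open>(u, v)\<close>, which is positive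
  because \<open>s \<cdot> f\<close> vanishes only finitely often. On the last interval \<open>(b, \<infinity>)\<close> of the pattern
  of \<open>f\<close> this gives \<open>s \<cdot> g > 0\<close>, as \<open>s \<cdot> g\<close> is also a nonnegative tail integral there.
  Reading the pattern of \<open>f\<close> from right to left, on each interval the continuous and strictly
  monotone \<open>s \<cdot> g\<close> either keeps the sign \<open>g\<close> has at the right end point or changes sign
  exactly once. As the pattern of \<open>f\<close> alternates, a new sign of \<open>g\<close> is always the preceding sign
  of \<open>f\<close>, so the pattern of \<open>g\<close> remains a final segment of that of \<open>f\<close>.\<close>

lemma sign_on_subset: "sign_on h I s \<Longrightarrow> J \<subseteq> I \<Longrightarrow> sign_on h J s"
  unfolding sign_on_def by (auto elim: rev_finite_subset)

lemma sign_on_Un: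
  assumes "sign_on h I s" "sign_on h J s" "0 \<le> s * h c"
  shows "sign_on h (I \<union> {c} \<union> J) s"
proof -
  have "{x \<in> I \<union> {c} \<union> J. h x = 0} \<subseteq> {x\<in>I. h x = 0} \<union> {c} \<union> {x\<in>J. h x = 0}"
    by auto
  then show ?thesis
    using assms unfolding sign_on_def by (auto intro: finite_subset)
qed

lemma sign_on_if_pos:
  assumes "\<And>x. x \<in> I \<Longrightarrow> 0 < s * h x"
  shows "sign_on h I s"
proof -
  have no_zeros: "{x\<in>I. h x = 0} = {}"
    using assms by force
  show ?thesis
    unfolding sign_on_def no_zeros using assms by (simp add: less_imp_le)
qed

lemma sign_on_iff_scale: "s \<noteq> 0 \<Longrightarrow> sign_on h I s \<longleftrightarrow> sign_on (\<lambda>x. s * h x) I 1"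
  unfolding sign_on_def by simp

lemma has_integral_pos_if_sign_on:
  fixes h :: "real \<Rightarrow> real"
  assumes hI: "(h has_integral I) {u<..<v}" and "u < v"
    and sign: "sign_on h {u<..<v} 1"
  shows "0 < I"
proof -
  let ?S = "{u<..<v}"
  have nonneg: "\<And>x. x \<in> ?S \<Longrightarrow> 0 \<le> h x" and fin: "finite {x\<in>?S. h x = 0}"
    using sign by (auto simp: sign_on_def)
  have "I \<noteq> 0"
  proof
    assume "I = 0"
    have int: "set_integrable lebesgue ?S h"
      using nonnegative_absolutely_integrable_1 hI nonneg by blast
    then have "(\<integral>x. indicator ?S x * h x \<partial>lebesgue) = 0"
      using set_lebesgue_integral_eq_integral(2)[OF int] hI \<open>I = 0\<close>
      by (simp add: integral_unique set_lebesgue_integral_def)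
    then have "AE x in lebesgue. indicator ?S x * h x = 0"
      using int nonneg
      by (subst (asm) integral_nonneg_eq_0_iff_AE) (auto simp: set_integrable_def indicator_def)
    then obtain N where N: "{x. indicator ?S x * h x \<noteq> 0} \<subseteq> N" "N \<in> null_sets lebesgue"
      by (auto elim!: AE_E simp: null_setsI)
    have "?S \<subseteq> N \<union> {x\<in>?S. h x = 0}"
      using N(1) by (auto simp: indicator_def)
    moreover have "negligible (N \<union> {x\<in>?S. h x = 0})"
      using N(2) fin by (metis negligible_Un negligible_finite negligible_iff_null_sets)
    ultimately have "negligible ?S"
      by (rule negligible_subset[rotated])
    then show False
      using \<open>u < v\<close> negligible_interval(2)[of u v] by (simp add: box_real)
  qed
  moreover have "0 \<le> I"
    using has_integral_nonneg[OF hI] nonneg by auto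
  ultimately show ?thesis by simp
qed

fun sign_pattern_from :: "(real \<Rightarrow> real) \<Rightarrow> real \<Rightarrow> real list \<Rightarrow> bool" where
  "sign_pattern_from h a [] \<longleftrightarrow> False"
| "sign_pattern_from h a [s] \<longleftrightarrow> sign_on h {a<..} s"
| "sign_pattern_from h a (s # t # ss) \<longleftrightarrow>
     (\<exists>c>a. sign_on h {a<..<c} s \<and> sign_pattern_from h c (t # ss))"

definition sign_breakpoints :: "(real \<Rightarrow> real) \<Rightarrow> real list \<Rightarrow> (nat \<Rightarrow> real) \<Rightarrow> bool" where
  "sign_breakpoints h ss b \<longleftrightarrow>
     (\<forall>i. Suc i < length ss \<longrightarrow> b i < b (Suc i) \<and> sign_on h {b i<..<b (Suc i)} (ss ! i)) \<and>
     sign_on h {b (length ss - 1)<..} (last ss)"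

lemma sign_breakpoints_singleton: "sign_breakpoints h [s] b \<longleftrightarrow> sign_on h {b 0<..} s"
  by (simp add: sign_breakpoints_def)

lemma sign_breakpoints_Cons:
  "sign_breakpoints h (s # t # ss) b \<longleftrightarrow>
     b 0 < b 1 \<and> sign_on h {b 0<..<b 1} s \<and> sign_breakpoints h (t # ss) (b \<circ> Suc)"
  by (auto simp: sign_breakpoints_def All_less_Suc2)

lemma sign_pattern_from_iff_breakpoints:
  "sign_pattern_from h a ss \<longleftrightarrow> ss \<noteq> [] \<and> (\<exists>b. b 0 = a \<and> sign_breakpoints h ss b)"
proof (induction h a ss rule: sign_pattern_from.induct)
  case (2 h a s)
  show ?case by (auto simp: sign_breakpoints_singleton intro: exI[of _ "\<lambda>_. a"])
next
  case (3 h a s t ss)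
  show ?case
  proof
    assume "sign_pattern_from h a (s # t # ss)"
    then obtain c b where "a < c" "sign_on h {a<..<c} s" "b 0 = c" "sign_breakpoints h (t # ss) b"
      using "3.IH" by auto
    moreover have "case_nat a b \<circ> Suc = b" by auto
    ultimately show "s # t # ss \<noteq> [] \<and> (\<exists>b. b 0 = a \<and> sign_breakpoints h (s # t # ss) b)"
      by (intro conjI exI[of _ "case_nat a b"]) (simp_all add: sign_breakpoints_Cons)
  next
    assume "s # t # ss \<noteq> [] \<and> (\<exists>b. b 0 = a \<and> sign_breakpoints h (s # t # ss) b)"
    then obtain b where "b 0 = a" "sign_breakpoints h (s # t # ss) b"
      by blast
    then have "a < b 1" "sign_on h {a<..<b 1} s" "sign_pattern_from h (b 1) (t # ss)"
      using "3.IH" by (auto simp: sign_breakpoints_Cons intro!: exI[of _ "b \<circ> Suc"])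
    then show "sign_pattern_from h a (s # t # ss)"
      by auto
  qed
qed simp

lemma has_sign_pattern_iff: "has_sign_pattern h ss \<longleftrightarrow> sign_pattern_from h 0 ss"
  by (simp add: has_sign_pattern_def sign_pattern_from_iff_breakpoints sign_breakpoints_def)

lemma sign_pattern_from_extend_first:
  assumes pat: "sign_pattern_from h c (s # ss)" and "a < c"
    and first: "sign_on h {a<..<c} s" and "0 \<le> s * h c"
  shows "sign_pattern_from h a (s # ss)"
proof (cases ss)
  case Nil
  have "{a<..} = {a<..<c} \<union> {c} \<union> {c<..}"
    using \<open>a < c\<close> by auto
  then show ?thesis
    using Nil pat sign_on_Un[OF first _ \<open>0 \<le> s * h c\<close>] by simp
next
  case (Cons t ts)
  then obtain c' where "c < c'" "sign_on h {c<..<c'} s" "sign_pattern_from h c' (t # ts)"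
    using pat by auto
  moreover have "{a<..<c'} = {a<..<c} \<union> {c} \<union> {c<..<c'}"
    using \<open>a < c\<close> \<open>c < c'\<close> by auto
  ultimately have "sign_on h {a<..<c'} s"
    using sign_on_Un[OF first _ \<open>0 \<le> s * h c\<close>] by simp
  with Cons \<open>a < c\<close> \<open>c < c'\<close> \<open>sign_pattern_from h c' (t # ts)\<close> show ?thesis
    by (auto intro!: exI[of _ c'])
qed

lemma sign_pattern_from_extend_left:
  fixes h :: "real \<Rightarrow> real"
  assumes cont: "continuous_on {a..d} h" and "a < d"
    and decr: "\<And>u v. a \<le> u \<Longrightarrow> u < v \<Longrightarrow> v \<le> d \<Longrightarrow> s * h v < s * h u"
    and pat: "sign_pattern_from h d (t # ts)" and "0 \<le> t * h d" and t: "t = s \<or> t = - s"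
  shows "sign_pattern_from h a (t # ts) \<and> 0 \<le> t * h a
    \<or> t = - s \<and> sign_pattern_from h a (s # t # ts) \<and> 0 \<le> s * h a"
proof (cases "0 \<le> s * h d")
  case True
  then have "0 < s * h x" if "a \<le> x" "x < d" for x
    using decr[OF that order.refl] by simp
  then have first: "sign_on h {a<..<d} s" and "0 \<le> s * h a"
    using \<open>a < d\<close> by (auto intro: sign_on_if_pos less_imp_le)
  show ?thesis
    using t
  proof
    assume "t = s"
    then show ?thesis
      using sign_pattern_from_extend_first[OF pat \<open>a < d\<close>] first True \<open>0 \<le> s * h a\<close> by simp
  next
    assume "t = - s"
    then show ?thesis
      using pat \<open>a < d\<close> first \<open>0 \<le> s * h a\<close> by auto
  qed
next
  case False
  with t \<open>0 \<le> t * h d\<close> have "t = - s"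
    by auto
  show ?thesis
  proof (cases "s * h a \<le> 0")
    case True
    then have "0 < t * h x" if "a < x" "x \<le> d" for x
      using decr[OF order.refl that] \<open>t = - s\<close> by simp
    then have "sign_on h {a<..<d} t"
      by (auto intro: sign_on_if_pos)
    then show ?thesis
      using sign_pattern_from_extend_first[OF pat \<open>a < d\<close> _ \<open>0 \<le> t * h d\<close>] True \<open>t = - s\<close>
      by simp
  next
    case False
    have "continuous_on {a..d} (\<lambda>x. - (s * h x))"
      using cont by (intro continuous_intros)
    then obtain c where c: "a \<le> c" "c \<le> d" "s * h c = 0"
      using IVT'[of "\<lambda>x. - (s * h x)" a 0 d] False \<open>\<not> 0 \<le> s * h d\<close> \<open>a < d\<close> by force
    with False \<open>\<not> 0 \<le> s * h d\<close> have "a < c" "c < d"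
      by (auto simp: order.order_iff_strict)
    have "0 < s * h x" if "a < x" "x < c" for x
      using decr[of x c] that c by simp
    then have "sign_on h {a<..<c} s"
      by (auto intro: sign_on_if_pos)
    have "0 < t * h x" if "c < x" "x < d" for x
      using decr[of c x] that c \<open>t = - s\<close> by simp
    then have "sign_on h {c<..<d} t"
      by (auto intro: sign_on_if_pos)
    then have "sign_pattern_from h c (t # ts)"
      using sign_pattern_from_extend_first[OF pat \<open>c < d\<close> _ \<open>0 \<le> t * h d\<close>] by simp
    then show ?thesis
      using \<open>t = - s\<close> \<open>a < c\<close> \<open>sign_on h {a<..<c} s\<close> False by auto
  qed
qed

lemma drop_alternating:
  fixes s :: "'a :: group_add"
  assumes "successively (\<lambda>x y. y = - x) (s # ys)" "k < length ys"
  shows "drop k (s # ys) = - (ys ! k) # drop k ys"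
proof -
  have "(s # ys) ! k = - (ys ! k)"
    using successively_nth[OF assms(1), of k] assms(2) by simp
  then show ?thesis
    using Cons_nth_drop_Suc[of k "s # ys"] assms(2) by simp
qed

locale tail_integral =
  fixes f g :: "real \<Rightarrow> real"
  assumes has_integral_tail: "0 \<le> x \<Longrightarrow> (f has_integral g x) {x..}"
begin

lemma has_integral_Ioo:
  assumes "0 \<le> u" "u \<le> v"
  shows "(f has_integral (g u - g v)) {u<..<v}"
proof -
  have "((\<lambda>t. if t \<in> {u..} then f t else 0) has_integral g u) UNIV"
    "((\<lambda>t. if t \<in> {v..} then f t else 0) has_integral g v) UNIV"
    unfolding has_integral_restrict_UNIV using has_integral_tail assms by auto
  from has_integral_diff[OF this]
  have "((\<lambda>t. if t \<in> {u..<v} then f t else 0) has_integral (g u - g v)) UNIV"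
    by (rule has_integral_eq[rotated]) (use assms in auto)
  then have "(f has_integral (g u - g v)) {u..<v}"
    unfolding has_integral_restrict_UNIV .
  moreover have "negligible {x \<in> {u..<v} - {u<..<v}. f x \<noteq> 0}"
    by (rule negligible_subset[of "{u}"]) auto
  moreover have "negligible {x \<in> {u<..<v} - {u..<v}. f x \<noteq> 0}"
    by (rule negligible_subset[OF negligible_empty]) auto
  ultimately show ?thesis
    using has_integral_spike_set_eq by blast
qed

lemma sign_on_imp_strict_decreasing:
  assumes "0 \<le> u" "u < v" "sign_on f {u<..<v} s" "s \<noteq> 0"
  shows "s * g v < s * g u"
proof -
  have "((\<lambda>x. s * f x) has_integral s * (g u - g v)) {u<..<v}"
    using has_integral_Ioo assms by (intro has_integral_mult_right) auto
  then have "0 < s * (g u - g v)"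
    using assms sign_on_iff_scale[of s f] by (intro has_integral_pos_if_sign_on) auto
  then show ?thesis
    by (simp add: algebra_simps)
qed

lemma sign_on_imp_pos_tail:
  assumes "0 \<le> c" "sign_on f {c<..} s" "s \<noteq> 0" "c \<le> x"
  shows "0 < s * g x"
proof -
  have "((\<lambda>t. s * f t) has_integral s * g (x + 1)) {x + 1..}"
    using has_integral_tail assms by (intro has_integral_mult_right) auto
  moreover have "0 \<le> s * f t" if "t \<in> {x + 1..}" for t
    using assms that unfolding sign_on_def by auto
  ultimately have "0 \<le> s * g (x + 1)"
    by (rule has_integral_nonneg)
  moreover have "sign_on f {x<..<x + 1} s"
    using assms(2) by (rule sign_on_subset) (use assms(4) in auto)
  then have "s * g (x + 1) < s * g x"
    using assms by (intro sign_on_imp_strict_decreasing) auto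
  ultimately show ?thesis
    by linarith
qed

lemma continuous_on_tail:
  assumes "0 \<le> u"
  shows "continuous_on {u..v} g"
proof (cases "u \<le> v")
  case True
  have int: "(f has_integral (g x - g v)) {x..v}" if "x \<in> {u..v}" for x
    using that assms has_integral_Ioo[of x v] by (simp add: has_integral_Icc_iff_Ioo)
  then have "continuous_on {u..v} (\<lambda>x. integral {x..v} f + g v)"
    using True by (auto intro!: continuous_intros indefinite_integral_continuous_1')
  moreover have "integral {x..v} f + g v = g x" if "x \<in> {u..v}" for x
    using integral_unique[OF int[OF that]] by simp
  ultimately show ?thesis
    using continuous_on_eq by blast
qed simp

lemma sign_pattern_from_tail:
  assumes "0 \<le> a" "sign_pattern_from f a ss"
    and "successively (\<lambda>x y. y = - x) ss" "set ss \<subseteq> {-1, 1}"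
  shows "\<exists>k<length ss. sign_pattern_from g a (drop k ss) \<and> 0 \<le> ss ! k * g a"
  using assms
proof (induction ss arbitrary: a rule: induct_list012)
  case (2 s)
  then have "0 < s * g x" if "a \<le> x" for x
    using sign_on_imp_pos_tail[of a s x] that by auto
  then show ?case
    by (auto intro!: exI[of _ 0] sign_on_if_pos less_imp_le)
next
  case (3 s t ss)
  then obtain c where "a < c" and first: "sign_on f {a<..<c} s"
    and rest: "sign_pattern_from f c (t # ss)"
    by auto
  have "\<exists>k<length (t # ss). sign_pattern_from g c (drop k (t # ss)) \<and> 0 \<le> (t # ss) ! k * g c"
    using "3.IH"(2)[of c] "3.prems"(1,3,4) \<open>a < c\<close> rest by auto
  then obtain k where k: "k < length (t # ss)"
    and pat: "sign_pattern_from g c (drop k (t # ss))" and "0 \<le> (t # ss) ! k * g c"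
    by blast
  let ?\<tau> = "(t # ss) ! k"
  have drop_k: "drop k (t # ss) = ?\<tau> # drop (Suc k) (t # ss)"
    using k by (rule Cons_nth_drop_Suc[symmetric])
  have "s \<in> {-1, 1}" "?\<tau> \<in> {-1, 1}"
    using "3.prems"(4) nth_mem[OF k] by auto
  then have "?\<tau> = s \<or> ?\<tau> = - s" "s \<noteq> 0"
    by auto
  have decr: "s * g v < s * g u" if "a \<le> u" "u < v" "v \<le> c" for u v
    using first \<open>0 \<le> a\<close> that \<open>s \<noteq> 0\<close>
    by (intro sign_on_imp_strict_decreasing sign_on_subset[OF first]) auto
  let ?ts = "drop (Suc k) (t # ss)"
  have "sign_pattern_from g a (?\<tau> # ?ts) \<and> 0 \<le> ?\<tau> * g a
    \<or> ?\<tau> = - s \<and> sign_pattern_from g a (s # ?\<tau> # ?ts) \<and> 0 \<le> s * g a"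
    using continuous_on_tail[OF \<open>0 \<le> a\<close>] \<open>a < c\<close> decr pat[unfolded drop_k]
      \<open>0 \<le> ?\<tau> * g c\<close> \<open>?\<tau> = s \<or> ?\<tau> = - s\<close>
    by (rule sign_pattern_from_extend_left)
  then show ?case
  proof (elim disjE conjE)
    assume "sign_pattern_from g a (?\<tau> # ?ts)" "0 \<le> ?\<tau> * g a"
    then show ?case
      using k drop_k by (intro exI[of _ "Suc k"]) auto
  next
    assume "?\<tau> = - s" and extended: "sign_pattern_from g a (s # ?\<tau> # ?ts)" "0 \<le> s * g a"
    have drop_k': "drop k (s # t # ss) = s # ?\<tau> # ?ts"
      using drop_alternating[OF "3.prems"(3) k] \<open>?\<tau> = - s\<close> drop_k by simp
    then have "(s # t # ss) ! k = s"
      using hd_drop_conv_nth[of k "s # t # ss"] k by simp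
    with drop_k' extended k show ?case
      by (intro exI[of _ k]) auto
  qed
qed simp

theorem has_sign_pattern_tail:
  assumes "has_sign_pattern f ss"
    and "successively (\<lambda>x y. y = - x) ss" "set ss \<subseteq> {-1, 1}"
  shows "\<exists>k<length ss. has_sign_pattern g (drop k ss)"
  using sign_pattern_from_tail[of 0 ss] assms by (auto simp: has_sign_pattern_iff)

end

theorem lemma7:
  fixes f g :: "real \<Rightarrow> real" and sf :: "real list"
  assumes g_def: "\<forall>x\<ge>0. (f has_integral g x) {x..}"
    and pat: "sf \<in> {[-1, 1], [1, -1], [1, -1, 1], [-1, 1, -1, 1]}"
    and f_pat: "has_sign_pattern f sf"
  shows "\<exists>k < length sf. has_sign_pattern g (drop k sf)"
proof -
  interpret tail_integral f g
    using g_def by unfold_locales auto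
  show ?thesis
    using has_sign_pattern_tail[OF f_pat] pat by auto
qed

end
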